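(* Let $N\geq1$, $0\leq m\leq2$ and $\varepsilon>0$. Let $a\in C(\mathbb{R}^N)$ and let $J\in L^1(\mathbb{R}^N)$ be nonnegative, radially symmetric, with $\int_{\mathbb{R}^N}J=1$; set $J_\varepsilon(z)=\varepsilon^{-N}J(z/\varepsilon)$. Suppose $u_\varepsilon\in L^\infty(\mathbb{R}^N)$ is nonnegative and satisfies $$\frac{1}{\varepsilon^m}\big(J_\varepsilon\ast u_\varepsilon-u_\varepsilon\big)+u_\varepsilon(a-u_\varepsilon)=0\quad\text{a.e. in }\mathbb{R}^N.$$ Then either $u_\varepsilon>0$ a.e. in $\mathbb{R}^N$ or $u_\varepsilon\equiv0$ a.e. in $\mathbb{R}^N$.
   Context: $(J_\varepsilon\ast u)(x)=\int_{\mathbb{R}^N}J_\varepsilon(x-y)u(y)\,\mathrm{d}y$. *)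

theory Defs
  imports "HOL-Analysis.Analysis"
begin

definition rescaled_kernel :: "real \<Rightarrow> ('a::euclidean_space \<Rightarrow> real) \<Rightarrow> 'a \<Rightarrow> real" where
  "rescaled_kernel \<epsilon> J z = J (scaleR (1 / \<epsilon>) z) / \<epsilon> ^ DIM('a)"

definition conv :: "('a::euclidean_space \<Rightarrow> real) \<Rightarrow> ('a \<Rightarrow> real) \<Rightarrow> 'a \<Rightarrow> real" where
  "conv K u x = (\<integral>y. K (x - y) * u y \<partial>lebesgue)"

end

(*
  Let Z be the zero set of u. At a zero x of u the equation collapses to (J_eps * u)(x) = 0,
  so u vanishes almost everywhere on x - D, where D is a symmetric set of positive measure on
  which J_eps is positive. Swapping the order of the quantifiers, for almost every t in D almost
  every point of Z stays in Z when translated by t. The translations with this property are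
  closed under addition, and by Steinhaus' theorem (applied to those t in D for which t and -t
  both have it) they contain a ball around 0, hence all of R^N. Integrating the measure of
  Z \<inter> (Z^c - t) over t by Tonelli then gives |Z| |Z^c| = 0.
*)
theory Submission
  imports Defs
begin

lemma AE_lborel_affine:
  fixes t :: "'a::euclidean_space" and c :: real
  assumes c: "c \<noteq> 0" and ae: "AE x in lborel. P x"
  shows "AE x in lborel. P (t + c *\<^sub>R x)"
proof -
  obtain N where N: "N \<in> null_sets lborel" and P: "\<And>x. x \<notin> N \<Longrightarrow> P x"
    using AE_E3[OF ae] by auto
  have [measurable]: "N \<in> sets borel" using N by auto
  have "AE x in density (distr lborel borel (\<lambda>x. t + c *\<^sub>R x)) (\<lambda>_. ennreal (\<bar>c\<bar> ^ DIM('a))). x \<notin> N"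
    using AE_not_in[OF N] by (simp only: lborel_affine[OF c, of t, symmetric])
  then have "AE x in lborel. t + c *\<^sub>R x \<notin> N"
    by (simp add: AE_density AE_distr_iff c)
  then show ?thesis by eventually_elim (rule P)
qed

lemma
  fixes t :: "'a::euclidean_space" and c :: real
  assumes c: "c \<noteq> 0"
  shows lebesgue_affine:
      "lebesgue = density (distr lebesgue lebesgue (\<lambda>x. t + c *\<^sub>R x)) (\<lambda>_. ennreal (\<bar>c\<bar> ^ DIM('a)))"
    and lebesgue_affine_measurable_scaleR: "(\<lambda>x. t + c *\<^sub>R x) \<in> lebesgue \<rightarrow>\<^sub>M lebesgue"
  using lebesgue_affine_euclidean[of "\<lambda>_. c" t] lebesgue_affine_measurable[of "\<lambda>_. c" t] c
  unfolding scaleR_scaleR[symmetric] scaleR_sum_right[symmetric] euclidean_representation prod_constant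
  by blast+

lemma nn_integral_lebesgue_affine:
  fixes t :: "'a::euclidean_space" and c :: real
  assumes f[measurable]: "f \<in> borel_measurable lebesgue" and c: "c \<noteq> 0"
  shows "(\<integral>\<^sup>+x. f x \<partial>lebesgue) = ennreal (\<bar>c\<bar> ^ DIM('a)) * (\<integral>\<^sup>+x. f (t + c *\<^sub>R x) \<partial>lebesgue)"
  using lebesgue_affine_measurable_scaleR[OF c, of t]
  by (subst lebesgue_affine[OF c, of t])
     (simp add: nn_integral_density nn_integral_distr nn_integral_cmult)

lemma integrable_lebesgue_affine:
  fixes f :: "'a::euclidean_space \<Rightarrow> 'b::{banach, second_countable_topology}"
  assumes f: "integrable lebesgue f" and c: "c \<noteq> 0"
  shows "integrable lebesgue (\<lambda>x. f (t + c *\<^sub>R x))"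
proof -
  have [measurable]: "f \<in> borel_measurable lebesgue" "(\<lambda>x. t + c *\<^sub>R x) \<in> lebesgue \<rightarrow>\<^sub>M lebesgue"
    using f c by (auto intro: lebesgue_affine_measurable_scaleR)
  show ?thesis
    using f nn_integral_lebesgue_affine[of "\<lambda>x. ennreal (norm (f x))" c t] c
    by (auto simp: integrable_iff_bounded ennreal_mult_less_top)
qed

lemma Steinhaus_bounded:
  fixes F :: "'a::euclidean_space set"
  assumes F: "F \<in> lmeasurable" and F_bounded: "bounded F" and F_pos: "measure lebesgue F > 0"
  obtains r where "r > 0" "ball 0 r \<subseteq> {a - b |a b. a \<in> F \<and> b \<in> F}"
proof -
  obtain T where T: "closed T" "T \<subseteq> F" "F - T \<in> lmeasurable"
      "emeasure lebesgue (F - T) < ennreal (measure lebesgue F)"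
    using sets_lebesgue_inner_closed[of F "measure lebesgue F"] F F_pos by (auto simp: fmeasurable_def)
  have T_meas: "T \<in> lmeasurable"
    using T F by (metis Diff_Diff_Int fmeasurable.Diff inf.absorb_iff2)
  have "measure lebesgue (F - T) < measure lebesgue F"
    using T(3,4) by (simp add: emeasure_eq_measure2 ennreal_less_iff)
  moreover have "measure lebesgue F = measure lebesgue T + measure lebesgue (F - T)"
    using measure_Un2[OF T_meas T(3)] T(2) by (simp add: Un_absorb1)
  ultimately have T_pos: "measure lebesgue T > 0" by linarith
  obtain U where U: "open U" "T \<subseteq> U" "U - T \<in> lmeasurable"
      "emeasure lebesgue (U - T) < ennreal (measure lebesgue T)"
    using sets_lebesgue_outer_open[of T "measure lebesgue T"] T_meas T_pos by (auto simp: fmeasurable_def)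
  have U_meas: "U \<in> lmeasurable"
    using fmeasurable.Un[OF T_meas U(3)] U(2) by (simp add: Un_absorb1)
  have U_small: "measure lebesgue U < 2 * measure lebesgue T"
    using measure_Un2[OF T_meas U(3)] U(2,3,4) T_pos
    by (simp add: Un_absorb1 emeasure_eq_measure2 ennreal_less_iff)
  have "compact T"
    using T(1,2) F_bounded bounded_subset compact_eq_bounded_closed by blast
  then obtain d where d: "d > 0" "\<forall>x\<in>T. \<forall>y\<in>-U. d \<le> dist x y"
    using separate_compact_closed[of T "-U"] U(1,2) by auto
  have "v \<in> {a - b |a b. a \<in> F \<and> b \<in> F}" if v: "norm v < d" for v
  proof (rule ccontr)
    assume v_notin: "v \<notin> {a - b |a b. a \<in> F \<and> b \<in> F}"
    \<comment> \<open>Then \<open>T\<close> and \<open>v + T\<close> are disjoint subsets of \<open>U\<close>,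
      so \<open>U\<close> has at least twice the measure of \<open>T\<close>.\<close>
    have disjoint: "T \<inter> (+) v ` T = {}"
      using v_notin T(2) by (force simp: algebra_simps)
    have "(+) v ` T \<subseteq> U"
      using d(2) v by (force simp: dist_norm)
    then have "measure lebesgue (T \<union> (+) v ` T) \<le> measure lebesgue U"
      using U(2) U_meas fmeasurable.Un[OF T_meas measurable_translation[OF T_meas]]
      by (intro measure_mono_fmeasurable) (auto simp: fmeasurable_def)
    moreover have "measure lebesgue (T \<union> (+) v ` T) = 2 * measure lebesgue T"
      using measure_Un3[OF T_meas measurable_translation[OF T_meas]] disjoint
      by (simp add: measure_translation)
    ultimately show False using U_small by linarith
  qed
  with d(1) show thesis by (intro that[of d]) auto
qed

lemma Steinhaus:
  fixes E :: "'a::euclidean_space set"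
  assumes E: "E \<in> sets lebesgue" and E_pos: "emeasure lebesgue E \<noteq> 0"
  obtains r where "r > 0" "ball 0 r \<subseteq> {a - b |a b. a \<in> E \<and> b \<in> E}"
proof -
  have "\<exists>n::nat. emeasure lebesgue (E \<inter> cball 0 (real n)) \<noteq> 0"
  proof (rule ccontr)
    assume "\<not> ?thesis"
    then have "emeasure lebesgue (\<Union>n. E \<inter> cball 0 (real n)) = 0"
      using E by (intro emeasure_UN_eq_0) auto
    moreover have "(\<Union>n. E \<inter> cball 0 (real n)) = E"
      by (auto simp: real_arch_simple)
    ultimately show False using E_pos by simp
  qed
  then obtain n :: nat where n: "emeasure lebesgue (E \<inter> cball 0 (real n)) \<noteq> 0" ..
  have bounded: "bounded (E \<inter> cball 0 (real n))" by (simp add: bounded_Int)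
  then have meas: "E \<inter> cball 0 (real n) \<in> lmeasurable"
    using E by (intro bounded_set_imp_lmeasurable) auto
  then have "measure lebesgue (E \<inter> cball 0 (real n)) > 0"
    using n emeasure_eq_measure2[OF meas] by (simp add: zero_less_measure_iff)
  from Steinhaus_bounded[OF meas bounded this] obtain r
    where "r > 0" "ball 0 r \<subseteq> {a - b |a b. a \<in> E \<inter> cball 0 (real n) \<and> b \<in> E \<inter> cball 0 (real n)}" .
  moreover have "{a - b |a b. a \<in> E \<inter> cball 0 (real n) \<and> b \<in> E \<inter> cball 0 (real n)}
      \<subseteq> {a - b |a b. a \<in> E \<and> b \<in> E}"
    by blast
  ultimately show thesis using that by (meson order_trans)
qed

lemma add_closed_eq_UNIV_if_ball_subset:
  fixes G :: "'a::real_normed_vector set"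
  assumes r: "r > 0" and ball: "ball 0 r \<subseteq> G" and add: "\<And>s t. s \<in> G \<Longrightarrow> t \<in> G \<Longrightarrow> s + t \<in> G"
  shows "G = UNIV"
proof -
  have "v \<in> G" for v
  proof -
    obtain n :: nat where n: "norm v / r < real n" using reals_Archimedean2 by blast
    then have "n > 0" using r by (metis gr0I norm_ge_zero divide_nonneg_pos of_nat_0 not_less)
    define w where "w = v /\<^sub>R real n"
    have "norm w < r" using n \<open>n > 0\<close> r by (simp add: w_def field_simps)
    then have w: "w \<in> G" using ball by auto
    have "real (Suc j) *\<^sub>R w \<in> G" for j
    proof (induction j)
      case 0
      then show ?case using w by simp
    next
      case (Suc j)
      have "real (Suc (Suc j)) *\<^sub>R w = real (Suc j) *\<^sub>R w + w"
        by (simp only: of_nat_Suc[of "Suc j"] scaleR_add_left scaleR_one add.commute)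
      then show ?case using add[OF Suc w] by simp
    qed
    from this[of "n - 1"] show "v \<in> G" using \<open>n > 0\<close> by (simp add: w_def)
  qed
  then show ?thesis by auto
qed

lemma AE_translate_mem_add:
  fixes Z :: "'a::euclidean_space set"
  assumes s: "AE x in lborel. x \<in> Z \<longrightarrow> x + s \<in> Z"
    and t: "AE x in lborel. x \<in> Z \<longrightarrow> x + t \<in> Z"
  shows "AE x in lborel. x \<in> Z \<longrightarrow> x + (s + t) \<in> Z"
proof -
  have "AE x in lborel. s + x \<in> Z \<longrightarrow> (s + x) + t \<in> Z"
    using AE_lborel_affine[of 1 _ s, OF _ t] by simp
  with s show ?thesis by eventually_elim (simp add: add.commute add.left_commute)
qed

lemma AE_translate_mem_commute:
  fixes Z D :: "'a::euclidean_space set"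
  assumes [measurable]: "Z \<in> sets borel" "D \<in> sets borel"
    and closed: "AE x in lborel. x \<in> Z \<longrightarrow> (AE y in lborel. y - x \<in> D \<longrightarrow> y \<in> Z)"
  shows "AE t in lborel. t \<in> D \<longrightarrow> (AE x in lborel. x \<in> Z \<longrightarrow> x + t \<in> Z)"
proof -
  have "AE x in lborel. AE t in lborel. x \<in> Z \<longrightarrow> t \<in> D \<longrightarrow> x + t \<in> Z"
    using closed
  proof eventually_elim
    case (elim x)
    show ?case
    proof (cases "x \<in> Z")
      case True
      with elim have "AE y in lborel. y - x \<in> D \<longrightarrow> y \<in> Z" by blast
      from AE_lborel_affine[of 1 _ x, OF _ this] show ?thesis by simp
    qed simp
  qed
  then have "AE t in lborel. AE x in lborel. x \<in> Z \<longrightarrow> t \<in> D \<longrightarrow> x + t \<in> Z"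
    by (subst (asm) lborel_pair.AE_commute) measurable
  then show ?thesis by eventually_elim (auto elim: eventually_mono)
qed

lemma translation_invariant_null_or_conull:
  fixes Z D :: "'a::euclidean_space set"
  assumes [measurable]: "Z \<in> sets borel" "D \<in> sets borel"
    and D_nonnull: "emeasure lborel D \<noteq> 0" and D_symmetric: "\<And>t. t \<in> D \<Longrightarrow> -t \<in> D"
    and invariant: "AE t in lborel. t \<in> D \<longrightarrow> (AE x in lborel. x \<in> Z \<longrightarrow> x + t \<in> Z)"
  shows "Z \<in> null_sets lborel \<or> -Z \<in> null_sets lborel"
proof -
  define \<Phi> where "\<Phi> t = (\<integral>\<^sup>+x. indicator Z x * indicator (-Z) (x + t) \<partial>lborel)" for t
  have [measurable]: "\<Phi> \<in> borel_measurable borel"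
    unfolding \<Phi>_def by measurable
  have \<Phi>_eq_0_iff: "\<Phi> t = 0 \<longleftrightarrow> (AE x in lborel. x \<in> Z \<longrightarrow> x + t \<in> Z)" for t
    unfolding \<Phi>_def by (subst nn_integral_0_iff_AE) (auto split: split_indicator)
  define G where "G = {t. \<Phi> t = 0}"
  have G_add: "s + t \<in> G" if "s \<in> G" "t \<in> G" for s t
    using that AE_translate_mem_add[of Z s t] by (simp add: G_def \<Phi>_eq_0_iff)
  define E where "E = {t \<in> D. t \<in> G \<and> -t \<in> G}"
  have E_borel[measurable]: "E \<in> sets borel"
    unfolding E_def G_def by measurable
  have D_G: "AE t in lborel. t \<in> D \<longrightarrow> t \<in> G"
    using invariant by (simp add: G_def \<Phi>_eq_0_iff)
  have "AE t in lborel. -t \<in> D \<longrightarrow> -t \<in> G"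
    using AE_lborel_affine[of "-1" _ 0, OF _ D_G] by simp
  with D_G have "AE t in lborel. t \<in> D \<longrightarrow> t \<in> E"
    by eventually_elim (auto simp: E_def D_symmetric)
  then have "emeasure lborel D \<le> emeasure lborel E"
    by (rule emeasure_mono_AE) simp
  with D_nonnull have "emeasure lebesgue E \<noteq> 0" by auto
  moreover have "E \<in> sets lebesgue"
    using E_borel by (intro sets_completionI_sets) simp
  ultimately obtain r where r: "r > 0" "ball 0 r \<subseteq> {a - b |a b. a \<in> E \<and> b \<in> E}"
    using Steinhaus by blast
  have "{a - b |a b. a \<in> E \<and> b \<in> E} \<subseteq> G"
  proof safe
    fix a b assume "a \<in> E" "b \<in> E"
    then show "a - b \<in> G"
      using G_add[of a "-b"] by (simp add: E_def)
  qed
  with r(2) have "ball 0 r \<subseteq> G" by (rule order_trans)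
  with r(1) have "G = UNIV"
    using G_add by (rule add_closed_eq_UNIV_if_ball_subset)
  have "emeasure lborel Z * emeasure lborel (-Z) = (\<integral>\<^sup>+x. indicator Z x * emeasure lborel (-Z) \<partial>lborel)"
    by (simp add: nn_integral_multc)
  also have "\<dots> = (\<integral>\<^sup>+x. \<integral>\<^sup>+t. indicator Z x * indicator (-Z) (x + t) \<partial>lborel \<partial>lborel)"
  proof (intro nn_integral_cong)
    fix x :: 'a
    have "indicator (-Z) \<in> borel_measurable lebesgue"
      by (intro measurable_completion) measurable
    from nn_integral_lebesgue_affine[OF this, of 1 x]
    have "emeasure lborel (-Z) = (\<integral>\<^sup>+t. indicator (-Z) (x + t) \<partial>lborel)"
      by (simp add: nn_integral_completion)
    then show "indicator Z x * emeasure lborel (-Z) = (\<integral>\<^sup>+t. indicator Z x * indicator (-Z) (x + t) \<partial>lborel)"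
      by (simp add: nn_integral_cmult)
  qed
  also have "\<dots> = (\<integral>\<^sup>+t. \<Phi> t \<partial>lborel)"
    unfolding \<Phi>_def by (subst lborel_pair.Fubini') auto
  also have "\<dots> = 0"
  proof -
    have "\<Phi> t = 0" for t
      using \<open>G = UNIV\<close> unfolding G_def by (metis UNIV_I mem_Collect_eq)
    then show ?thesis by simp
  qed
  finally show ?thesis
    by (auto simp: null_sets_def)
qed

lemma obtain_symmetric_borel_subset:
  fixes A :: "'a::euclidean_space set"
  assumes A: "A \<in> sets lebesgue" and A_symmetric: "\<And>z. z \<in> A \<Longrightarrow> -z \<in> A"
  obtains D where "D \<in> sets borel" "D \<subseteq> A" "\<And>z. z \<in> D \<Longrightarrow> -z \<in> D"
    "AE z in lborel. z \<in> A \<longrightarrow> z \<in> D"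
proof -
  obtain S N N' where A_eq: "A = S \<union> N" and "N \<subseteq> N'" and N': "N' \<in> null_sets lborel"
    and S[measurable]: "S \<in> sets borel"
    using sets_completionE[OF A] by auto
  define D where "D = {z. z \<in> S \<and> -z \<in> S}"
  have D_borel: "D \<in> sets borel"
    unfolding D_def by measurable
  have "AE z in lborel. -z \<notin> N'"
    using AE_lborel_affine[of "-1" _ 0, OF _ AE_not_in[OF N']] by simp
  with AE_not_in[OF N'] have D_ae: "AE z in lborel. z \<in> A \<longrightarrow> z \<in> D"
    by eventually_elim (use A_eq \<open>N \<subseteq> N'\<close> A_symmetric in \<open>auto simp: D_def\<close>)
  show thesis
    by (rule that[OF D_borel _ _ D_ae]) (auto simp: D_def A_eq)
qed

lemma obtain_symmetric_borel_positivity_set: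
  fixes K :: "'a::euclidean_space \<Rightarrow> real"
  assumes K_meas: "K \<in> borel_measurable lebesgue" and K_symmetric: "\<And>z. K (-z) = K z"
    and K_nontrivial: "\<not> (AE z in lebesgue. K z \<le> 0)"
  obtains D where "D \<in> sets borel" "emeasure lborel D \<noteq> 0" "\<And>z. z \<in> D \<Longrightarrow> -z \<in> D"
    "\<And>z. z \<in> D \<Longrightarrow> 0 < K z"
proof -
  have K_pos_meas: "{z. 0 < K z} \<in> sets lebesgue"
    using K_meas unfolding borel_measurable_iff_greater by simp
  have K_pos_symmetric: "-z \<in> {z. 0 < K z}" if "z \<in> {z. 0 < K z}" for z
    using that K_symmetric by simp
  obtain D where D: "D \<in> sets borel" "D \<subseteq> {z. 0 < K z}" "\<And>z. z \<in> D \<Longrightarrow> -z \<in> D"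
    and D_ae: "AE z in lborel. z \<in> {z. 0 < K z} \<longrightarrow> z \<in> D"
    using obtain_symmetric_borel_subset[OF K_pos_meas K_pos_symmetric] by blast
  have "emeasure lborel D \<noteq> 0"
  proof
    assume "emeasure lborel D = 0"
    then have "AE z in lborel. z \<notin> D"
      using D(1) by (intro AE_not_in) auto
    with D_ae have "AE z in lebesgue. K z \<le> 0"
      unfolding AE_completion_iff by eventually_elim auto
    with K_nontrivial show False ..
  qed
  with D show thesis
    by (intro that) auto
qed

lemma AE_pos_or_AE_zero_if_kernel_closed:
  fixes u K :: "'a::euclidean_space \<Rightarrow> real"
  assumes u_meas: "u \<in> borel_measurable lebesgue" and u_nonneg: "AE x in lebesgue. 0 \<le> u x"
    and K_meas: "K \<in> borel_measurable lebesgue" and K_symmetric: "\<And>z. K (-z) = K z"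
    and K_nontrivial: "\<not> (AE z in lebesgue. K z \<le> 0)"
    and closed: "AE x in lebesgue. u x = 0 \<longrightarrow> (AE y in lebesgue. 0 < K (x - y) \<longrightarrow> u y = 0)"
  shows "(AE x in lebesgue. 0 < u x) \<or> (AE x in lebesgue. u x = 0)"
proof -
  obtain v where "v \<in> borel_measurable lborel" and u_eq_v: "AE x in lborel. u x = v x"
    using completion_ex_borel_measurable_real[OF u_meas] by auto
  then have [measurable]: "v \<in> borel_measurable borel" by simp
  define Z where "Z = {x. v x = 0}"
  have Z_borel: "Z \<in> sets borel"
    unfolding Z_def by measurable
  obtain D where D: "D \<in> sets borel" and D_nonnull: "emeasure lborel D \<noteq> 0"
    and D_symmetric: "\<And>z. z \<in> D \<Longrightarrow> -z \<in> D" and D_pos: "\<And>z. z \<in> D \<Longrightarrow> 0 < K z"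
    using obtain_symmetric_borel_positivity_set[OF K_meas K_symmetric K_nontrivial] by blast
  have Z_closed: "AE x in lborel. x \<in> Z \<longrightarrow> (AE y in lborel. y - x \<in> D \<longrightarrow> y \<in> Z)"
    using closed[unfolded AE_completion_iff] u_eq_v
  proof eventually_elim
    case (elim x)
    show ?case
    proof
      assume "x \<in> Z"
      with elim have "AE y in lborel. 0 < K (x - y) \<longrightarrow> u y = 0"
        by (simp add: Z_def AE_completion_iff)
      with u_eq_v show "AE y in lborel. y - x \<in> D \<longrightarrow> y \<in> Z"
        by eventually_elim (use D_pos D_symmetric in \<open>force simp: Z_def\<close>)
    qed
  qed
  have "Z \<in> null_sets lborel \<or> -Z \<in> null_sets lborel"
    by (rule translation_invariant_null_or_conull[OF Z_borel D D_nonnull D_symmetric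
          AE_translate_mem_commute[OF Z_borel D Z_closed]])
  then show ?thesis
  proof
    assume "Z \<in> null_sets lborel"
    from AE_not_in[OF this] u_eq_v u_nonneg[unfolded AE_completion_iff] have "AE x in lborel. 0 < u x"
      by eventually_elim (auto simp: Z_def)
    then show ?thesis by (simp add: AE_completion_iff)
  next
    assume "-Z \<in> null_sets lborel"
    from AE_not_in[OF this] u_eq_v have "AE x in lborel. u x = 0"
      by eventually_elim (auto simp: Z_def)
    then show ?thesis by (simp add: AE_completion_iff)
  qed
qed

lemma integrable_rescaled_kernel:
  assumes "integrable lebesgue J" and "\<epsilon> \<noteq> 0"
  shows "integrable lebesgue (rescaled_kernel \<epsilon> J)"
  using integrable_lebesgue_affine[OF assms(1), of "1 / \<epsilon>" 0] assms(2)
  unfolding rescaled_kernel_def by (intro integrable_divide_zero) simp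

lemma rescaled_kernel_not_AE_nonpos:
  fixes J :: "'a::euclidean_space \<Rightarrow> real"
  assumes eps: "\<epsilon> > 0" and J_nonneg: "\<And>z. 0 \<le> J z" and J_mass: "(\<integral>z. J z \<partial>lebesgue) \<noteq> 0"
  shows "\<not> (AE z in lebesgue. rescaled_kernel \<epsilon> J z \<le> 0)"
proof
  assume "AE z in lebesgue. rescaled_kernel \<epsilon> J z \<le> 0"
  then have "AE z in lborel. J ((1 / \<epsilon>) *\<^sub>R z) \<le> 0"
    by (simp add: AE_completion_iff rescaled_kernel_def pos_divide_le_eq[OF zero_less_power[OF eps]])
  from AE_lborel_affine[of \<epsilon> _ 0, OF _ this] have "AE z in lebesgue. J z = 0"
    using eps J_nonneg by (auto simp: AE_completion_iff intro: antisym elim!: eventually_mono)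
  with J_mass show False
    by (simp add: integral_eq_zero_AE)
qed

lemma AE_conv_integrand_eq_0:
  fixes K u :: "'a::euclidean_space \<Rightarrow> real"
  assumes K_int: "integrable lebesgue K" and K_nonneg: "\<And>z. 0 \<le> K z"
    and u_meas: "u \<in> borel_measurable lebesgue" and u_bounded: "AE y in lebesgue. 0 \<le> u y \<and> u y \<le> C"
    and conv_0: "conv K u x = 0"
  shows "AE y in lebesgue. K (x - y) * u y = 0"
proof -
  have K_shift: "integrable lebesgue (\<lambda>y. K (x - y))"
    using integrable_lebesgue_affine[OF K_int, of "-1" x] by simp
  then have "integrable lebesgue (\<lambda>y. C * K (x - y))" by simp
  then have "integrable lebesgue (\<lambda>y. K (x - y) * u y)"
  proof (rule Bochner_Integration.integrable_bound)
    show "(\<lambda>y. K (x - y) * u y) \<in> borel_measurable lebesgue"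
      using borel_measurable_integrable[OF K_shift] u_meas by (rule borel_measurable_times)
    show "AE y in lebesgue. norm (K (x - y) * u y) \<le> norm (C * K (x - y))"
      using u_bounded
    proof eventually_elim
      case (elim y)
      then have "K (x - y) * u y \<le> K (x - y) * C"
        using K_nonneg by (intro mult_left_mono) auto
      with elim K_nonneg[of "x - y"] show ?case
        by (simp add: abs_mult mult.commute)
    qed
  qed
  moreover have "AE y in lebesgue. 0 \<le> K (x - y) * u y"
    using u_bounded by eventually_elim (simp add: K_nonneg)
  ultimately show ?thesis
    using conv_0 by (simp add: conv_def integral_nonneg_eq_0_iff_AE)
qed

theorem lemma2p1:
  fixes a J u :: "'a::euclidean_space \<Rightarrow> real" and m \<epsilon> :: real
  assumes m_nonneg: "0 \<le> m" and m_le2: "m \<le> 2"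
    and eps_pos: "\<epsilon> > 0"
    and a_cont: "continuous_on UNIV a"
    and J_int: "integrable lebesgue J"
    and J_nonneg: "\<And>z. J z \<ge> 0"
    and J_radial: "\<And>x y. norm x = norm y \<Longrightarrow> J x = J y"
    and J_mass: "(\<integral>z. J z \<partial>lebesgue) = 1"
    and u_meas: "u \<in> borel_measurable lebesgue"
    and u_bdd: "\<exists>C. AE x in lebesgue. \<bar>u x\<bar> \<le> C"
    and u_nonneg: "AE x in lebesgue. u x \<ge> 0"
    and eqn: "AE x in lebesgue.
      (conv (rescaled_kernel \<epsilon> J) u x - u x) / \<epsilon> powr m + u x * (a x - u x) = 0"
  shows "(AE x in lebesgue. u x > 0) \<or> (AE x in lebesgue. u x = 0)"
proof -
  define K where "K = rescaled_kernel \<epsilon> J"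
  have K_int: "integrable lebesgue K"
    unfolding K_def using J_int eps_pos by (intro integrable_rescaled_kernel) auto
  have K_nonneg: "0 \<le> K z" for z
    unfolding K_def rescaled_kernel_def using J_nonneg eps_pos by simp
  have K_symmetric: "K (-z) = K z" for z
    unfolding K_def rescaled_kernel_def by (subst J_radial[of _ "(1 / \<epsilon>) *\<^sub>R z"]) auto
  have K_nontrivial: "\<not> (AE z in lebesgue. K z \<le> 0)"
    unfolding K_def using eps_pos J_nonneg J_mass by (intro rescaled_kernel_not_AE_nonpos) auto
  obtain C where "AE x in lebesgue. \<bar>u x\<bar> \<le> C" using u_bdd ..
  with u_nonneg have u_bounded: "AE y in lebesgue. 0 \<le> u y \<and> u y \<le> C"
    by eventually_elim auto
  have "AE x in lebesgue. u x = 0 \<longrightarrow> (AE y in lebesgue. 0 < K (x - y) \<longrightarrow> u y = 0)"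
    using eqn
  proof eventually_elim
    case (elim x)
    show ?case
    proof
      assume "u x = 0"
      with elim have "conv K u x = 0"
        using eps_pos by (simp add: K_def)
      from AE_conv_integrand_eq_0[OF K_int K_nonneg u_meas u_bounded this]
      show "AE y in lebesgue. 0 < K (x - y) \<longrightarrow> u y = 0"
        by eventually_elim auto
    qed
  qed
  with u_meas u_nonneg K_int K_symmetric K_nontrivial show ?thesis
    by (intro AE_pos_or_AE_zero_if_kernel_closed) (auto intro: borel_measurable_integrable)
qed

end
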